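(* Let $s\ge1$ and $n\ge0$ be integers. If $n\leq s$, then $A_{231,321}(U_{\mathrm{spine}=s,n}^\alpha)=1$. If $n>s$, then \[A_{231,321}(U_{\mathrm{spine}=s,n}^\alpha)=\sum_{j=1}^sA_{231,321}(U_{\mathrm{spine}=s,n-j}^\alpha).\]
   Context: For integers $s\ge1$ and $n\ge 0$, the labeled uneven comb $U^\alpha_{\mathrm{spine}=s,n}$ is the poset on $\{1,\dots,n\}$ whose order is generated by the covering relations $i\lessdot i+1$ for $1\le i\le s-1$ with $i+1\le n$, and $i\lessdot i+s$ whenever $i+s\le n$. A linear extension is viewed as a permutation of $[n]$ in which $x$ precedes $y$ whenever $x<y$ in the poset. $A_{231,321}(P)$ denotes the number of linear extensions of $P$ that avoid both patterns $231$ and $321$. *)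

theory Defs
  imports Main
begin

definition comb_cover :: "nat \<Rightarrow> nat \<Rightarrow> (nat \<times> nat) set" where
  "comb_cover s n =
     {(i, i + 1) | i. 1 \<le> i \<and> i \<le> s - 1 \<and> i + 1 \<le> n}
   \<union> {(i, i + s) | i. 1 \<le> i \<and> i + s \<le> n}"

definition comb_le :: "nat \<Rightarrow> nat \<Rightarrow> nat \<Rightarrow> nat \<Rightarrow> bool" where
  "comb_le s n x y \<longleftrightarrow> (x, y) \<in> (comb_cover s n)\<^sup>*"

definition comb_linext :: "nat \<Rightarrow> nat \<Rightarrow> nat list set" where
  "comb_linext s n =
     {w. distinct w \<and> set w = {1..n} \<and>
         (\<forall>a < length w. \<forall>b < length w.
            comb_le s n (w ! a) (w ! b) \<and> w ! a \<noteq> w ! b \<longrightarrow> a < b)}"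

definition contains_pattern :: "nat list \<Rightarrow> nat list \<Rightarrow> bool" where
  "contains_pattern p w \<longleftrightarrow>
     (\<exists>f. strict_mono_on {..<length p} f \<and> (\<forall>a < length p. f a < length w) \<and>
          (\<forall>a < length p. \<forall>b < length p. (p ! a < p ! b \<longleftrightarrow> w ! f a < w ! f b)))"

definition avoids :: "nat list \<Rightarrow> nat list \<Rightarrow> bool" where
  "avoids p w \<longleftrightarrow> \<not> contains_pattern p w"

definition A_231_321_comb :: "nat \<Rightarrow> nat \<Rightarrow> nat" where
  "A_231_321_comb s n =
     card {w \<in> comb_linext s n. avoids [2,3,1] w \<and> avoids [3,2,1] w}"

end

theory Submission
  imports Defs
begin

text \<open>A permutation avoids both 231 and 321 iff no entry has two larger entries before it.
  In such a linear extension w of the comb on [n], everything after the maximum n is smaller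
  than n, hence increasing, and larger than everything before n; so
  w = u \<cdot> n (n-j+1) \<dots> (n-1) where u is an avoiding linear extension of the comb on [n-j].
  Conversely every such word is an avoiding linear extension provided n may precede
  n-j+1, \<dots>, n-1 in the comb: because of the covering n-s \<lessdot> n (resp. n-1 \<lessdot> n
  when n \<le> s) this happens exactly for 1 \<le> j \<le> s (resp. j = 1).\<close>

definition no_two_larger_before :: "nat list \<Rightarrow> bool" where
  "no_two_larger_before w \<longleftrightarrow>
     (\<forall>i j k. i < j \<longrightarrow> j < k \<longrightarrow> k < length w \<longrightarrow> \<not> (w!k < w!i \<and> w!k < w!j))"

lemma avoids_231_321_iff_no_two_larger_before:
  assumes "distinct w"
  shows "(avoids [2,3,1] w \<and> avoids [3,2,1] w) \<longleftrightarrow> no_two_larger_before w"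
proof
  assume avoid: "avoids [2,3,1] w \<and> avoids [3,2,1] w"
  show "no_two_larger_before w" unfolding no_two_larger_before_def
  proof (intro allI impI notI)
    fix i j k assume ij: "i < j" and jk: "j < k" and k: "k < length w"
      and smaller: "w!k < w!i \<and> w!k < w!j"
    define f where "f = (\<lambda>a::nat. if a = 0 then i else if a = 1 then j else k)"
    have mono: "strict_mono_on {..<3} f" unfolding strict_mono_on_def f_def using ij jk by auto
    have bounded: "\<forall>a<3. f a < length w" unfolding f_def using ij jk k by auto
    have "w!i \<noteq> w!j" using assms ij jk k by (simp add: nth_eq_iff_index_eq)
    then consider "w!i < w!j" | "w!j < w!i" by linarith
    then show False
    proof cases
      case 1
      have "contains_pattern [2,3,1] w" unfolding contains_pattern_def
        using mono bounded 1 smaller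
        by (intro exI[of _ f]) (auto simp: f_def less_Suc_eq numeral_3_eq_3)
      then show False using avoid by (simp add: avoids_def)
    next
      case 2
      have "contains_pattern [3,2,1] w" unfolding contains_pattern_def
        using mono bounded 2 smaller
        by (intro exI[of _ f]) (auto simp: f_def less_Suc_eq numeral_3_eq_3)
      then show False using avoid by (simp add: avoids_def)
    qed
  qed
next
  assume free: "no_two_larger_before w"
  have "\<not> contains_pattern p w" if p: "p = [2,3,1] \<or> p = [3,2,1]" for p
  proof
    assume "contains_pattern p w"
    then obtain f where mono: "strict_mono_on {..<length p} f"
      and bounded: "\<forall>a < length p. f a < length w"
      and iso: "\<forall>a < length p. \<forall>b < length p. (p ! a < p ! b \<longleftrightarrow> w ! f a < w ! f b)"
      unfolding contains_pattern_def by blast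
    have "length p = 3" "p ! 2 < p ! 0" "p ! 2 < p ! 1" using p by auto
    then have "f 0 < f 1" "f 1 < f 2" "f 2 < length w"
      and "w ! f 2 < w ! f 0" "w ! f 2 < w ! f 1"
      using mono bounded iso unfolding strict_mono_on_def by auto
    then show False using free unfolding no_two_larger_before_def by blast
  qed
  then show "avoids [2,3,1] w \<and> avoids [3,2,1] w" by (simp add: avoids_def)
qed

lemma no_two_larger_before_appendD: "no_two_larger_before (u @ v) \<Longrightarrow> no_two_larger_before u"
  unfolding no_two_larger_before_def
proof (intro allI impI notI)
  fix i j k assume free: "\<forall>i j k. i < j \<longrightarrow> j < k \<longrightarrow> k < length (u @ v) \<longrightarrow>
      \<not> ((u @ v) ! k < (u @ v) ! i \<and> (u @ v) ! k < (u @ v) ! j)"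
    and ij: "i < j" and jk: "j < k" and k: "k < length u"
    and smaller: "u ! k < u ! i \<and> u ! k < u ! j"
  have "(u @ v) ! i = u ! i" "(u @ v) ! j = u ! j" "(u @ v) ! k = u ! k"
    using ij jk k by (simp_all add: nth_append)
  then show False using free ij jk k smaller by fastforce
qed

lemma no_two_larger_before_append:
  assumes u: "no_two_larger_before u" and v: "no_two_larger_before v"
    and below: "\<forall>x\<in>set u. \<forall>y\<in>set v. x < y"
  shows "no_two_larger_before (u @ v)"
  unfolding no_two_larger_before_def
proof (intro allI impI notI)
  fix i j k assume ij: "i < j" and jk: "j < k" and k: "k < length (u @ v)"
    and smaller: "(u @ v) ! k < (u @ v) ! i \<and> (u @ v) ! k < (u @ v) ! j"
  consider "k < length u" | "i < length u" "length u \<le> k" | "length u \<le> i"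
    by linarith
  then show False
  proof cases
    case 1
    then show False using u ij jk smaller unfolding no_two_larger_before_def
      by (metis nth_append order.strict_trans)
  next
    case 2
    have "u ! i < v ! (k - length u)" using 2 k below by simp
    then show False using 2 smaller by (simp add: nth_append)
  next
    case 3
    have "i - length u < j - length u" "j - length u < k - length u" "k - length u < length v"
      using 3 ij jk k by auto
    moreover have "v ! (k - length u) < v ! (i - length u)"
      and "v ! (k - length u) < v ! (j - length u)"
      using 3 ij jk smaller by (simp_all add: nth_append)
    ultimately show False using v unfolding no_two_larger_before_def by blast
  qed
qed

lemma no_two_larger_before_Cons_sorted:
  assumes "sorted_wrt (<) v"
  shows "no_two_larger_before (n # v)"
  unfolding no_two_larger_before_def
proof (intro allI impI notI)
  fix i j k assume ij: "i < j" and jk: "j < k" and k: "k < length (n # v)"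
    and smaller: "(n # v) ! k < (n # v) ! i \<and> (n # v) ! k < (n # v) ! j"
  obtain j' k' where "j = Suc j'" "k = Suc k'" using ij jk by (cases j; cases k) auto
  moreover from this have "v ! j' < v ! k'"
    using assms jk k by (auto simp: sorted_wrt_iff_nth_less)
  ultimately show False using smaller by auto
qed

lemma no_two_larger_before_split_at_max:
  assumes free: "no_two_larger_before (u @ n # v)" and distinct: "distinct (u @ v)"
    and max: "\<forall>y\<in>set v. y < n"
  shows "sorted_wrt (<) v" and "\<forall>x\<in>set u. \<forall>y\<in>set v. x < y"
proof -
  let ?w = "u @ n # v" and ?m = "length u"
  have at_m: "?w ! ?m = n" and after: "?w ! (?m + Suc i) = v ! i" for i
    by (simp_all add: nth_append)
  show "sorted_wrt (<) v"
    unfolding sorted_wrt_iff_nth_less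
  proof (intro allI impI)
    fix i j assume ij: "i < j" and j: "j < length v"
    have "v ! i \<noteq> v ! j" using distinct ij j by (simp add: nth_eq_iff_index_eq)
    moreover have "?m < ?m + Suc i" "?m + Suc i < ?m + Suc j" "?m + Suc j < length ?w"
      using ij j by auto
    then have "\<not> (v ! j < n \<and> v ! j < v ! i)"
      using free at_m after unfolding no_two_larger_before_def by metis
    ultimately show "v ! i < v ! j" using max j by auto
  qed
  show "\<forall>x\<in>set u. \<forall>y\<in>set v. x < y"
  proof (intro ballI)
    fix x y assume x: "x \<in> set u" and y: "y \<in> set v"
    obtain a where a: "a < ?m" "u ! a = x" using x by (auto simp: in_set_conv_nth)
    obtain b where b: "b < length v" "v ! b = y" using y by (auto simp: in_set_conv_nth)
    have "?w ! a = x" using a by (simp add: nth_append)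
    moreover have "a < ?m" "?m < ?m + Suc b" "?m + Suc b < length ?w" using a b by auto
    ultimately have "\<not> (?w ! (?m + Suc b) < x \<and> ?w ! (?m + Suc b) < n)"
      using free at_m unfolding no_two_larger_before_def by metis
    then have "\<not> (y < x \<and> y < n)" using after b by simp
    moreover have "x \<noteq> y" using distinct x y by auto
    ultimately show "x < y" using max y by auto
  qed
qed

lemma interval_split_lower_upper:
  fixes u v :: "nat list"
  assumes distinct: "distinct (u @ v)" and interval: "set (u @ v) = {a..<b}"
    and below: "\<forall>x\<in>set u. \<forall>y\<in>set v. x < y"
  shows "set u = {a..<a + length u}" and "set v = {a + length u..<b}"
proof -
  have lengths: "length u + length v = b - a"
    using distinct_card[OF distinct] interval by simp
  have "set u \<subseteq> {a..<a + length u}"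
  proof
    fix x assume x: "x \<in> set u"
    have "set v \<subseteq> {x<..<b}" using below x interval by auto
    then have "length v \<le> b - Suc x"
      using card_mono[of "{x<..<b}" "set v"] distinct_card[of v] distinct by simp
    moreover have "x \<in> {a..<b}" using x interval by auto
    ultimately show "x \<in> {a..<a + length u}" using lengths by auto
  qed
  then show lower: "set u = {a..<a + length u}"
    using distinct by (intro card_subset_eq) (auto simp: distinct_card)
  have "set v = {a..<b} - set u" using interval distinct by auto
  then show "set v = {a + length u..<b}" using lower by auto
qed

lemma comb_cover_less: "s \<ge> 1 \<Longrightarrow> (x, y) \<in> comb_cover s n \<Longrightarrow> x < y"
  unfolding comb_cover_def by auto

lemma comb_le_imp_le:
  assumes "s \<ge> 1" "comb_le s n x y"
  shows "x \<le> y"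
proof -
  have "(x, y) \<in> (comb_cover s n)\<^sup>*" using assms(2) by (simp add: comb_le_def)
  then show ?thesis
    by (induction rule: rtrancl_induct) (auto dest: comb_cover_less[OF assms(1)])
qed

lemma comb_le_restrict:
  assumes "s \<ge> 1" "m \<le> n" "y \<le> m"
  shows "comb_le s n x y \<longleftrightarrow> comb_le s m x y"
proof
  assume "comb_le s n x y"
  then have "(x, y) \<in> (comb_cover s n)\<^sup>*" by (simp add: comb_le_def)
  then have "y \<le> m \<longrightarrow> (x, y) \<in> (comb_cover s m)\<^sup>*"
  proof (induction rule: rtrancl_induct)
    case base
    then show ?case by simp
  next
    case (step z y)
    have "z < y" using comb_cover_less[OF assms(1) step(2)] .
    moreover have "y \<le> m \<Longrightarrow> (z, y) \<in> comb_cover s m"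
      using step(2) unfolding comb_cover_def by auto
    ultimately show ?case using step(3) by (auto intro: rtrancl_into_rtrancl)
  qed
  then show "comb_le s m x y" using assms(3) by (simp add: comb_le_def)
next
  assume "comb_le s m x y"
  moreover have "comb_cover s m \<subseteq> comb_cover s n"
    using assms(2) unfolding comb_cover_def by auto
  ultimately show "comb_le s n x y" unfolding comb_le_def using rtrancl_mono by blast
qed

text \<open>Above the first spine the only coverings are the teeth i \<lessdot> i + s.\<close>
lemma comb_le_above_spine:
  assumes "s \<ge> 1" "s < y" "comb_le s n x y" "x \<noteq> y"
  shows "x + s \<le> y"
proof -
  obtain z where "(x, z) \<in> (comb_cover s n)\<^sup>*" and cover: "(z, y) \<in> comb_cover s n"
    using assms(3,4) unfolding comb_le_def by (metis rtranclE)
  then have "x \<le> z" using comb_le_imp_le[OF assms(1)] by (simp add: comb_le_def)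
  moreover have "z + s = y" using cover assms(2) unfolding comb_cover_def by auto
  ultimately show ?thesis by simp
qed

definition comb_may_precede :: "nat \<Rightarrow> nat \<Rightarrow> nat \<Rightarrow> nat \<Rightarrow> bool" where
  "comb_may_precede s n x y \<longleftrightarrow> \<not> (comb_le s n y x \<and> y \<noteq> x)"

lemma comb_may_precede_if_less: "s \<ge> 1 \<Longrightarrow> x < y \<Longrightarrow> comb_may_precede s n x y"
  unfolding comb_may_precede_def using comb_le_imp_le by fastforce

lemma sorted_wrt_comb_may_precede_restrict:
  assumes "s \<ge> 1" "m \<le> n" "set u \<subseteq> {..m}"
  shows "sorted_wrt (comb_may_precede s n) u \<longleftrightarrow> sorted_wrt (comb_may_precede s m) u"
  using assms(3)
  by (induction u) (auto simp: comb_may_precede_def comb_le_restrict[OF assms(1,2)])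

lemma comb_linext_eq_sorted_wrt:
  "comb_linext s n = {w. distinct w \<and> set w = {1..n} \<and> sorted_wrt (comb_may_precede s n) w}"
proof -
  have "(\<forall>a<length w. \<forall>b<length w. comb_le s n (w ! a) (w ! b) \<and> w ! a \<noteq> w ! b \<longrightarrow> a < b)
    \<longleftrightarrow> (\<forall>i j. i < j \<longrightarrow> j < length w \<longrightarrow> comb_may_precede s n (w ! i) (w ! j))"
    (is "?extension \<longleftrightarrow> ?sorted") for w
  proof (intro iffI allI impI)
    fix i j assume ?extension and "i < j" "j < length w"
    then show "comb_may_precede s n (w ! i) (w ! j)"
      unfolding comb_may_precede_def by (meson order.strict_trans not_less_iff_gr_or_eq)
  next
    fix a b assume ?sorted and "a < length w" "b < length w"
      and "comb_le s n (w ! a) (w ! b) \<and> w ! a \<noteq> w ! b"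
    then show "a < b" unfolding comb_may_precede_def by (metis linorder_neqE_nat)
  qed
  then show ?thesis unfolding comb_linext_def sorted_wrt_iff_nth_less by simp
qed

definition comb_avoiders :: "nat \<Rightarrow> nat \<Rightarrow> nat list set" where
  "comb_avoiders s n = {w \<in> comb_linext s n. no_two_larger_before w}"

lemma mem_comb_avoiders_iff:
  "w \<in> comb_avoiders s n \<longleftrightarrow>
     distinct w \<and> set w = {1..n} \<and> sorted_wrt (comb_may_precede s n) w \<and> no_two_larger_before w"
  unfolding comb_avoiders_def comb_linext_eq_sorted_wrt by auto

lemma A_231_321_comb_eq_card: "A_231_321_comb s n = card (comb_avoiders s n)"
proof -
  have "{w \<in> comb_linext s n. avoids [2,3,1] w \<and> avoids [3,2,1] w} = comb_avoiders s n"
    unfolding comb_avoiders_def comb_linext_def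
    using avoids_231_321_iff_no_two_larger_before by blast
  then show ?thesis unfolding A_231_321_comb_def by simp
qed

lemma comb_avoiders_0: "comb_avoiders s 0 = {[]}"
  by (auto simp: mem_comb_avoiders_iff no_two_larger_before_def)

lemma finite_comb_avoiders: "finite (comb_avoiders s n)"
proof (rule finite_subset)
  show "comb_avoiders s n \<subseteq> {w. set w \<subseteq> {1..n} \<and> length w = n}"
    using distinct_card by (fastforce simp: mem_comb_avoiders_iff)
  show "finite {w. set w \<subseteq> {1..n} \<and> length w = n}"
    by (rule finite_lists_length_eq) simp
qed

definition final_block :: "nat \<Rightarrow> nat \<Rightarrow> nat list" where
  "final_block n j = n # [n - j + 1..<n]"

definition block_sizes :: "nat \<Rightarrow> nat \<Rightarrow> nat set" where
  "block_sizes s n = (if n \<le> s then {1} else {1..s})"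

lemma block_sizes_bounds: "1 \<le> n \<Longrightarrow> j \<in> block_sizes s n \<Longrightarrow> 1 \<le> j \<and> j \<le> n"
  unfolding block_sizes_def by (auto split: if_splits)

lemma comb_may_precede_max_iff_block_size:
  assumes s: "s \<ge> 1" and j: "1 \<le> j" "j \<le> n"
  shows "(\<forall>y\<in>{n - j + 1..<n}. comb_may_precede s n n y) \<longleftrightarrow> j \<in> block_sizes s n"
proof -
  have not_before: "\<not> comb_may_precede s n n y" if "(y, n) \<in> comb_cover s n" for y
    using comb_cover_less[OF s that] that
    unfolding comb_may_precede_def comb_le_def by auto
  show ?thesis
  proof (cases "n \<le> s")
    case True
    have "j = 1" if all: "\<forall>y\<in>{n - j + 1..<n}. comb_may_precede s n n y"
    proof (rule ccontr)
      assume "j \<noteq> 1"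
      then have "n - 1 \<in> {n - j + 1..<n}" and "(n - 1, n) \<in> comb_cover s n"
        using True j unfolding comb_cover_def by auto
      then show False using all not_before by blast
    qed
    then show ?thesis using True by (auto simp: block_sizes_def)
  next
    case False
    have "j \<le> s" if all: "\<forall>y\<in>{n - j + 1..<n}. comb_may_precede s n n y"
    proof (rule ccontr)
      assume "\<not> j \<le> s"
      then have "n - s \<in> {n - j + 1..<n}" and "(n - s, n) \<in> comb_cover s n"
        using False s j unfolding comb_cover_def by auto
      then show False using all not_before by blast
    qed
    moreover have "comb_may_precede s n n y" if "j \<le> s" "y \<in> {n - j + 1..<n}" for y
      using comb_le_above_spine[OF s, of n n y] False that
      unfolding comb_may_precede_def by auto
    ultimately show ?thesis using False j by (auto simp: block_sizes_def)
  qed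
qed

lemma append_final_block_mem_comb_avoiders:
  assumes s: "s \<ge> 1" and n: "1 \<le> n" and j: "j \<in> block_sizes s n"
    and u: "u \<in> comb_avoiders s (n - j)"
  shows "u @ final_block n j \<in> comb_avoiders s n"
proof -
  have j_bounds: "1 \<le> j" "j \<le> n" using block_sizes_bounds[OF n j] by auto
  have distinct_u: "distinct u" and set_u: "set u = {1..n - j}"
    and sorted_u: "sorted_wrt (comb_may_precede s (n - j)) u"
    and free_u: "no_two_larger_before u"
    using u by (auto simp: mem_comb_avoiders_iff)
  have set_block: "set (final_block n j) = {n - j + 1..n}"
    unfolding final_block_def using j_bounds by auto
  have "distinct (u @ final_block n j)"
    using distinct_u set_u set_block by (auto simp: final_block_def)
  moreover have "set (u @ final_block n j) = {1..n}"
    using set_u set_block j_bounds by auto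
  moreover have "sorted_wrt (comb_may_precede s n) (u @ final_block n j)"
  proof -
    have "sorted_wrt (comb_may_precede s n) u"
      using sorted_u sorted_wrt_comb_may_precede_restrict[OF s, of "n - j" n u] set_u by auto
    moreover have "sorted_wrt (comb_may_precede s n) [n - j + 1..<n]"
      using sorted_wrt_upt[of "n - j + 1" n]
      by (rule sorted_wrt_mono_rel[rotated]) (use comb_may_precede_if_less[OF s] in auto)
    moreover have "\<forall>y\<in>{n - j + 1..<n}. comb_may_precede s n n y"
      using comb_may_precede_max_iff_block_size[OF s j_bounds] j by blast
    moreover have "comb_may_precede s n x y" if "x \<in> set u" "y \<in> set (final_block n j)" for x y
      using that set_u set_block comb_may_precede_if_less[OF s] by auto
    ultimately show ?thesis unfolding final_block_def sorted_wrt_append by simp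
  qed
  moreover have "no_two_larger_before (u @ final_block n j)"
    using set_u set_block unfolding final_block_def
    by (intro no_two_larger_before_append[OF free_u no_two_larger_before_Cons_sorted])
      (auto simp del: upt_Suc)
  ultimately show ?thesis by (simp add: mem_comb_avoiders_iff)
qed

lemma comb_avoiders_split_final_block:
  assumes s: "s \<ge> 1" and n: "1 \<le> n" and w: "w \<in> comb_avoiders s n"
  obtains j u where "j \<in> block_sizes s n" "u \<in> comb_avoiders s (n - j)" "w = u @ final_block n j"
proof -
  have distinct_w: "distinct w" and set_w: "set w = {1..n}"
    and sorted_w: "sorted_wrt (comb_may_precede s n) w" and free_w: "no_two_larger_before w"
    using w by (auto simp: mem_comb_avoiders_iff)
  obtain u v where w_split: "w = u @ n # v"
    using set_w n by (metis atLeastAtMost_iff order_refl split_list)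
  define j where "j = n - length u"
  have distinct_uv: "distinct (u @ v)" and n_notin: "n \<notin> set u" "n \<notin> set v"
    using distinct_w w_split by auto
  have "set (u @ v) = set w - {n}" using w_split n_notin by auto
  then have set_uv: "set (u @ v) = {1..<n}"
    using set_w by (simp add: atLeastLessThan_eq_atLeastAtMost_diff)
  have v_below: "\<forall>y\<in>set v. y < n" using set_uv by auto
  have "no_two_larger_before (u @ n # v)" using free_w w_split by simp
  note split_at_max = no_two_larger_before_split_at_max[OF this distinct_uv v_below]
  note intervals = interval_split_lower_upper[OF distinct_uv set_uv split_at_max(2)]
  have "length (u @ v) = n - 1" using distinct_card[OF distinct_uv] set_uv by simp
  then have j_bounds: "1 \<le> j" "j \<le> n" and lower_end: "1 + length u = n - j + 1"
    using j_def n by auto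
  have set_u: "set u = {1..n - j}"
    using intervals(1) lower_end by (simp add: atLeastLessThanSuc_atLeastAtMost)
  have set_v: "set v = {n - j + 1..<n}" using intervals(2) lower_end by simp
  have v_sorted: "sorted_wrt (<) v" using split_at_max(1) .
  have v_eq: "v = [n - j + 1..<n]"
    using strict_sorted_equal[OF sorted_wrt_upt v_sorted] set_v by simp
  show thesis
  proof
    have "\<forall>y\<in>{n - j + 1..<n}. comb_may_precede s n n y"
      using sorted_w w_split set_v by (simp add: sorted_wrt_append)
    then show "j \<in> block_sizes s n"
      using comb_may_precede_max_iff_block_size[OF s j_bounds] by blast
    have "sorted_wrt (comb_may_precede s n) u"
      using sorted_w w_split by (simp add: sorted_wrt_append)
    then have "sorted_wrt (comb_may_precede s (n - j)) u"
      using sorted_wrt_comb_may_precede_restrict[OF s, of "n - j" n u] set_u by auto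
    then show "u \<in> comb_avoiders s (n - j)"
      using distinct_uv set_u free_w w_split no_two_larger_before_appendD
      by (auto simp: mem_comb_avoiders_iff)
    show "w = u @ final_block n j"
      unfolding final_block_def w_split v_eq ..
  qed
qed

lemma comb_avoiders_eq_UN_final_block:
  assumes "s \<ge> 1" "1 \<le> n"
  shows "comb_avoiders s n =
           (\<Union>j\<in>block_sizes s n. (\<lambda>u. u @ final_block n j) ` comb_avoiders s (n - j))"
    (is "_ = ?U")
proof
  show "comb_avoiders s n \<subseteq> ?U"
  proof
    fix w assume "w \<in> comb_avoiders s n"
    then obtain j u where "j \<in> block_sizes s n" "u \<in> comb_avoiders s (n - j)"
      and "w = u @ final_block n j"
      using comb_avoiders_split_final_block[OF assms] by blast
    then show "w \<in> ?U" by blast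
  qed
  show "?U \<subseteq> comb_avoiders s n"
    using append_final_block_mem_comb_avoiders[OF assms] by blast
qed

lemma card_comb_avoiders_rec:
  assumes s: "s \<ge> 1" and n: "1 \<le> n"
  shows "card (comb_avoiders s n) = (\<Sum>j\<in>block_sizes s n. card (comb_avoiders s (n - j)))"
proof -
  have disjoint: "(\<lambda>u. u @ final_block n i) ` comb_avoiders s (n - i)
      \<inter> (\<lambda>u. u @ final_block n j) ` comb_avoiders s (n - j) = {}"
    if i: "i \<in> block_sizes s n" and j: "j \<in> block_sizes s n" and "i \<noteq> j" for i j
  proof (rule ccontr)
    assume "\<not> ?thesis"
    then obtain u u' where u: "u \<in> comb_avoiders s (n - i)" and u': "u' \<in> comb_avoiders s (n - j)"
      and eq: "u @ final_block n i = u' @ final_block n j" by blast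
    have "n \<notin> set u" "n \<notin> set u'"
      using u u' block_sizes_bounds[OF n i] block_sizes_bounds[OF n j]
      by (auto simp: mem_comb_avoiders_iff)
    then have "[n - i + 1..<n] = [n - j + 1..<n]"
      using eq append_Cons_eq_iff[of n u "[n - i + 1..<n]" u' "[n - j + 1..<n]"]
      unfolding final_block_def by simp
    then have "length [n - i + 1..<n] = length [n - j + 1..<n]" by simp
    then have "i - 1 = j - 1"
      using block_sizes_bounds[OF n i] block_sizes_bounds[OF n j] by simp
    then show False
      using block_sizes_bounds[OF n i] block_sizes_bounds[OF n j] \<open>i \<noteq> j\<close> by linarith
  qed
  have "card (comb_avoiders s n) =
      (\<Sum>j\<in>block_sizes s n. card ((\<lambda>u. u @ final_block n j) ` comb_avoiders s (n - j)))"
    unfolding comb_avoiders_eq_UN_final_block[OF s n]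
  proof (rule card_UN_disjoint)
    show "finite (block_sizes s n)" by (simp add: block_sizes_def)
    show "\<forall>j\<in>block_sizes s n. finite ((\<lambda>u. u @ final_block n j) ` comb_avoiders s (n - j))"
      by (simp add: finite_comb_avoiders)
  qed (use disjoint in blast)
  also have "\<dots> = (\<Sum>j\<in>block_sizes s n. card (comb_avoiders s (n - j)))"
    by (intro sum.cong refl card_image inj_onI) simp
  finally show ?thesis .
qed

lemma card_comb_avoiders_short_spine:
  assumes "s \<ge> 1" "n \<le> s"
  shows "card (comb_avoiders s n) = 1"
  using assms(2)
proof (induction n)
  case 0
  then show ?case by (simp add: comb_avoiders_0)
next
  case (Suc n)
  then show ?case
    using card_comb_avoiders_rec[OF assms(1), of "Suc n"] by (simp add: block_sizes_def)
qed

theorem theorem7: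
  fixes s n :: nat
  assumes "s \<ge> 1"
  shows "(n \<le> s \<longrightarrow> A_231_321_comb s n = 1) \<and>
         (n > s \<longrightarrow> A_231_321_comb s n = (\<Sum>j = 1..s. A_231_321_comb s (n - j)))"
  using card_comb_avoiders_short_spine[OF assms] card_comb_avoiders_rec[OF assms, of n]
  by (simp add: A_231_321_comb_eq_card block_sizes_def)

end
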